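(* Let $\mathbf{X}$ be a Banach space and $\emptyset\ne\mathcal{S}\subset\mathbf{X}$. Assume that either 1. $\mathcal{S}$ is closed, bounded and convex; or 2. $\mathcal{S}=\{\mathbf{x}\in\mathbf{X}:\|\mathbf{x}\|_\ast\le r\}$ for some $r\in(0,\infty)$ and a map $\|\cdot\|_\ast:\mathbf{X}\to[0,\infty]$ such that (a) there is $\kappa\ge1$ with $\|\alpha\mathbf{x}\|_\ast=|\alpha|\|\mathbf{x}\|_\ast$ and $\|\mathbf{x}+\mathbf{y}\|_\ast\le\kappa(\|\mathbf{x}\|_\ast+\|\mathbf{y}\|_\ast)$ for all $\alpha\in\mathbb{R}$, $\mathbf{x},\mathbf{y}\in\mathbf{X}$; (b) there is $C\ge1$ with $\|\mathbf{x}\|_{\mathbf{X}}\le C\|\mathbf{x}\|_\ast$ for all $\mathbf{x}\in\mathbf{X}$; (c) $\mathcal{S}\subset\mathbf{X}$ is closed; (d) $\|\mathbf{x}\|_\ast\to\|\mathbf{x}_0\|_\ast$ whenever $\|\mathbf{x}-\mathbf{x}_0\|_\ast\to0$. Set $s^\ast:=s^\ast_{\mathbf{X}}(\mathcal{S})$. Then for each codec $\mathcal{C}=((E_R,D_R))_{R\in\mathbb{N}}$ there is $\mathbf{x}=\mathbf{x}(\mathcal{C})\in\mathcal{S}$ such that for each $\ell\in\mathbb{N}$, $\|\mathbf{x}-D_R(E_R(\mathbf{x}))\|_{\mathbf{X}}\ge R^{-(s^\ast+\ell^{-1})}$ for infinitely many $R\in\mathbb{N}$.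
   Context: For a real Banach space $\mathbf{X}$ and $\mathcal{S}\subset\mathbf{X}$: a codec is a sequence $((E_R,D_R))_{R\in\mathbb{N}}$ of maps $E_R:\mathcal{S}\to\{0,1\}^R$, $D_R:\{0,1\}^R\to\mathbf{X}$; distortion $\delta_{\mathcal{S},\mathbf{X}}(E_R,D_R)=\sup_{\mathbf{x}\in\mathcal{S}}\|\mathbf{x}-D_R(E_R(\mathbf{x}))\|_{\mathbf{X}}$; optimal compression rate $s^\ast_{\mathbf{X}}(\mathcal{S})=\sup\{s\ge0:\exists\text{ codec with }\sup_RR^s\delta_{\mathcal{S},\mathbf{X}}(E_R,D_R)<\infty\}\in[0,\infty]$. *)

theory Defs
  imports "HOL-Analysis.Analysis" "HOL-Library.Extended_Real" "HOL-Library.Extended_Nonnegative_Real"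
begin

text \<open>Bit strings of length R are modelled as bool lists of length R.
  A codec is a pair of sequences E :: nat => 'a => bool list (encoders, E R maps S into
  {0,1}^R) and D :: nat => bool list => 'a (decoders).\<close>

definition is_codec :: "'a set \<Rightarrow> (nat \<Rightarrow> 'a \<Rightarrow> bool list) \<Rightarrow> bool" where
  "is_codec S E \<longleftrightarrow> (\<forall>R\<ge>1. \<forall>x\<in>S. length (E R x) = R)"

definition distortion :: "'a set \<Rightarrow> ('a \<Rightarrow> bool list) \<Rightarrow> (bool list \<Rightarrow> 'a::real_normed_vector) \<Rightarrow> ereal" where
  "distortion S E\<^sub>R D\<^sub>R = (SUP x\<in>S. ereal (norm (x - D\<^sub>R (E\<^sub>R x))))"

definition optimal_rate :: "'a::real_normed_vector set \<Rightarrow> ereal" where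
  "optimal_rate S = Sup {ereal s | s. s \<ge> 0 \<and> (\<exists>E D. is_codec S E \<and>
       (SUP R\<in>{1::nat..}. ereal (real R powr s) * distortion S (E R) (D R)) < \<infinity>)}"

end

theory Submission
  imports Defs
begin

(* If no point of S were badly approximated, S would be the countable union, over l and N, of the
   closed sets of points lying within R powr -(s* + 1/l) of the R-th codebook for all R >= N.
   By Baire's theorem one of them contains a nonempty relatively open piece of S, and that piece
   contains a homothetic copy c + tS of S (by convexity, resp. by the homogeneity and continuity
   of the quasi-norm). Encoding c + t y by its nearest codeword and undoing the homothety then
   gives a codec for S of rate s* + 1/l, contradicting the optimality of s*. *)

definition codebook :: "(bool list \<Rightarrow> 'a) \<Rightarrow> nat \<Rightarrow> 'a set" where
  "codebook D\<^sub>R R = D\<^sub>R ` {bs. length bs = R}"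

lemma finite_codebook: "finite (codebook D\<^sub>R R)"
proof -
  have "{bs::bool list. length bs = R} = {bs. set bs \<subseteq> UNIV \<and> length bs = R}"
    by simp
  then show ?thesis
    unfolding codebook_def using finite_lists_length_eq[of "UNIV :: bool set" R] by simp
qed

lemma codebook_nonempty: "codebook D\<^sub>R R \<noteq> {}"
  unfolding codebook_def by (auto intro!: exI[of _ "replicate R False"])

lemma codeword_in_codebook: "length bs = R \<Longrightarrow> D\<^sub>R bs \<in> codebook D\<^sub>R R"
  unfolding codebook_def by simp

lemma infdist_attained_finite:
  fixes A :: "'a::metric_space set"
  assumes "finite A" "A \<noteq> {}"
  obtains a where "a \<in> A" "infdist x A = dist x a"
proof -
  have "infdist x A = Min (dist x ` A)"
    using assms by (simp add: infdist_notempty cInf_eq_Min)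
  moreover have "Min (dist x ` A) \<in> dist x ` A"
    using assms by (intro Min_in) auto
  ultimately show ?thesis using that by auto
qed

lemma nearest_codeword_encoder:
  fixes D :: "nat \<Rightarrow> bool list \<Rightarrow> 'a::metric_space"
  obtains E where "\<And>R x. length (E R x) = R"
    and "\<And>R x. dist x (D R (E R x)) = infdist x (codebook (D R) R)"
proof -
  have nearest: "\<exists>bs. length bs = R \<and> dist x (D R bs) = infdist x (codebook (D R) R)" for R x
  proof -
    obtain v where v: "v \<in> codebook (D R) R" "infdist x (codebook (D R) R) = dist x v"
      by (rule infdist_attained_finite[OF finite_codebook codebook_nonempty])
    then obtain bs where "length bs = R" "v = D R bs"
      unfolding codebook_def by blast
    with v show ?thesis by auto
  qed
  define E where "E R x = (SOME bs. length bs = R \<and> dist x (D R bs) = infdist x (codebook (D R) R))"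
    for R x
  have "length (E R x) = R \<and> dist x (D R (E R x)) = infdist x (codebook (D R) R)" for R x
    unfolding E_def by (rule someI_ex[OF nearest])
  then show ?thesis
    using that by blast
qed

lemma infdist_codebook_le_error:
  assumes "is_codec S E" "x \<in> S" "1 \<le> R"
  shows "infdist x (codebook (D R) R) \<le> norm (x - D R (E R x))"
proof -
  have "D R (E R x) \<in> codebook (D R) R"
    using assms by (intro codeword_in_codebook) (auto simp: is_codec_def)
  then show ?thesis
    by (metis dist_norm infdist_le)
qed

lemma closed_uniformly_approximable:
  "closed {x. \<forall>R\<ge>N. infdist x (A R) \<le> f R}"
proof -
  have "{x. \<forall>R\<ge>N. infdist x (A R) \<le> f R} = (\<Inter>R\<in>{N..}. {x. infdist x (A R) \<le> f R})"
    by auto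
  then show ?thesis
    by (auto intro!: closed_INT closed_Collect_le continuous_on_infdist continuous_on_id)
qed

lemma real_of_optimal_rate_nonneg: "0 \<le> real_of_ereal (optimal_rate S)"
proof (cases "optimal_rate S")
  case (real r)
  define A where "A = {ereal s | s. s \<ge> 0 \<and> (\<exists>E D. is_codec S E \<and>
       (SUP R\<in>{1::nat..}. ereal (real R powr s) * distortion S (E R) (D R)) < \<infinity>)}"
  have rate: "optimal_rate S = Sup A"
    unfolding optimal_rate_def A_def ..
  then have "A \<noteq> {}"
    using real by (auto simp: bot_ereal_def)
  then obtain e where "e \<in> A" by blast
  then have "0 \<le> e" and "e \<le> optimal_rate S"
    unfolding rate by (auto simp: A_def intro: Sup_upper)
  then show ?thesis
    using real order_trans[of 0 e] by fastforce
qed auto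

lemma optimal_rate_geI:
  assumes codec: "is_codec S E" and "0 \<le> s"
    and bound: "\<And>R x. 1 \<le> R \<Longrightarrow> x \<in> S \<Longrightarrow> real R powr s * norm (x - D R (E R x)) \<le> K"
  shows "ereal s \<le> optimal_rate S"
proof -
  have "ereal (real R powr s) * distortion S (E R) (D R) \<le> ereal K" if R: "1 \<le> R" for R
  proof -
    have pos: "0 < real R powr s"
      using R by simp
    have "distortion S (E R) (D R) \<le> ereal (K / real R powr s)"
      unfolding distortion_def
      using bound[OF R] pos by (intro SUP_least) (simp add: le_divide_eq mult.commute)
    then have "ereal (real R powr s) * distortion S (E R) (D R)
        \<le> ereal (real R powr s) * ereal (K / real R powr s)"
      by (rule ereal_mult_left_mono) simp
    also have "\<dots> = ereal K"
      using pos by simp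
    finally show ?thesis .
  qed
  then have "(SUP R\<in>{1::nat..}. ereal (real R powr s) * distortion S (E R) (D R)) < \<infinity>"
    by (intro le_less_trans[OF SUP_least]) auto
  then show ?thesis
    unfolding optimal_rate_def using codec \<open>0 \<le> s\<close> by (intro Sup_upper) blast
qed

lemma optimal_rate_ge_if_homothet_approximable:
  fixes S :: "'a::real_normed_vector set"
  assumes "bounded S" "0 < t" "0 \<le> s"
    and approx: "\<And>R y. N \<le> R \<Longrightarrow> y \<in> S \<Longrightarrow>
      infdist (c + t *\<^sub>R y) (codebook (D R) R) \<le> real R powr - s"
  shows "ereal s \<le> optimal_rate S"
proof -
  obtain M where M: "\<And>y. y \<in> S \<Longrightarrow> norm y \<le> M"
    using \<open>bounded S\<close> by (auto simp: bounded_iff)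
  obtain E\<^sub>0 where E\<^sub>0: "\<And>R x. length (E\<^sub>0 R x) = R"
    "\<And>R x. dist x (D R (E\<^sub>0 R x)) = infdist x (codebook (D R) R)"
    using nearest_codeword_encoder[of D] by blast
  define E where "E R y = E\<^sub>0 R (c + t *\<^sub>R y)" for R y
  (* D' undoes the homothety; below N the zero decoder is good enough, S being bounded. *)
  define D' where "D' R bs = (if N \<le> R then (1 / t) *\<^sub>R (D R bs - c) else 0)" for R bs
  have "is_codec S E"
    by (simp add: is_codec_def E_def E\<^sub>0)
  moreover have "real R powr s * norm (y - D' R (E R y)) \<le> max (1 / t) (real N powr s * M)"
    if R: "1 \<le> R" and y: "y \<in> S" for R y
  proof (cases "N \<le> R")
    case True
    have "y - D' R (E R y) = (1 / t) *\<^sub>R (c + t *\<^sub>R y - D R (E R y))"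
      using True \<open>0 < t\<close> by (simp add: D'_def algebra_simps)
    then have "norm (y - D' R (E R y)) = infdist (c + t *\<^sub>R y) (codebook (D R) R) / t"
      using \<open>0 < t\<close> E\<^sub>0(2) by (simp add: E_def dist_norm)
    also have "\<dots> \<le> real R powr - s / t"
      using approx[OF True y] \<open>0 < t\<close> by (simp add: divide_right_mono)
    finally have "real R powr s * norm (y - D' R (E R y)) \<le> real R powr s * (real R powr - s / t)"
      by (rule mult_left_mono) simp
    also have "\<dots> = 1 / t"
      using R by (simp add: powr_minus field_simps)
    finally show ?thesis by simp
  next
    case False
    have "real R powr s * norm (y - D' R (E R y)) \<le> real N powr s * M"
      using False M[OF y] \<open>0 \<le> s\<close> by (intro mult_mono powr_mono2) (auto simp: D'_def)
    then show ?thesis by simp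
  qed
  ultimately show ?thesis
    by (rule optimal_rate_geI[OF _ \<open>0 \<le> s\<close>])
qed

lemma Baire_closed_cover:
  fixes S :: "'a::complete_space set"
  assumes "closed S" "S \<noteq> {}" "countable I"
    and "\<And>i. i \<in> I \<Longrightarrow> closed (F i)" and "S \<subseteq> (\<Union>i\<in>I. F i)"
  obtains i U where "i \<in> I" "open U" "S \<inter> U \<noteq> {}" "S \<inter> U \<subseteq> F i"
proof (rule ccontr)
  assume no_piece: "\<not> thesis"
  have "(top_of_set S) interior_of (\<Union>i\<in>I. S \<inter> F i) = {}"
  proof (rule Baire_category_alt)
    show "completely_metrizable_space (top_of_set S) \<or>
          locally_compact_space (top_of_set S) \<and> regular_space (top_of_set S)"
      using \<open>closed S\<close> closed_closedin completely_metrizable_space_closedin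
        completely_metrizable_space_euclidean by blast
    show "countable ((\<lambda>i. S \<inter> F i) ` I)"
      using \<open>countable I\<close> by simp
    fix T assume "T \<in> (\<lambda>i. S \<inter> F i) ` I"
    then obtain i where i: "i \<in> I" "T = S \<inter> F i" by blast
    show "closedin (top_of_set S) T \<and> (top_of_set S) interior_of T = {}"
    proof
      show "closedin (top_of_set S) T"
        using i assms(4) by (simp add: closedin_closed_Int)
      show "(top_of_set S) interior_of T = {}"
      proof (rule ccontr)
        assume "(top_of_set S) interior_of T \<noteq> {}"
        moreover obtain U where "open U" "(top_of_set S) interior_of T = S \<inter> U"
          using openin_interior_of[of "top_of_set S" T] unfolding openin_open by blast
        ultimately show False
          using no_piece that[of i U] i interior_of_subset[of "top_of_set S" T] by auto
      qed
    qed
  qed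
  moreover have "(\<Union>i\<in>I. S \<inter> F i) = S"
    using assms(5) by blast
  ultimately show False
    using \<open>S \<noteq> {}\<close> interior_of_topspace[of "top_of_set S"] by simp
qed

definition locally_self_homothetic :: "'a::real_normed_vector set \<Rightarrow> bool" where
  "locally_self_homothetic S \<longleftrightarrow>
    (\<forall>U. open U \<longrightarrow> S \<inter> U \<noteq> {} \<longrightarrow> (\<exists>c t. 0 < t \<and> (\<lambda>y. c + t *\<^sub>R y) ` S \<subseteq> S \<inter> U))"

lemma exists_badly_approximated_point:
  fixes S :: "'a::banach set"
  assumes "S \<noteq> {}" "closed S" "bounded S" "locally_self_homothetic S"
    and codec: "is_codec S E" and "optimal_rate S \<noteq> \<infinity>"
  shows "\<exists>x\<in>S. \<forall>l::nat. 1 \<le> l \<longrightarrow>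
    (\<exists>\<^sub>\<infinity>R. real R powr - (real_of_ereal (optimal_rate S) + 1 / real l) \<le> norm (x - D R (E R x)))"
proof (rule ccontr)
  define s where "s l = real_of_ereal (optimal_rate S) + 1 / real l" for l :: nat
  define B where "B l N = {x. \<forall>R\<ge>N. infdist x (codebook (D R) R) \<le> real R powr - s l}" for l N :: nat
  assume no_bad_point: "\<not> ?thesis"
  have closed_B: "closed (case_prod B i)" for i
    by (cases i) (simp add: B_def closed_uniformly_approximable)
  have "S \<subseteq> (\<Union>i\<in>{1..} \<times> UNIV. case_prod B i)"
  proof
    fix x assume x: "x \<in> S"
    with no_bad_point obtain l where "1 \<le> l"
      and "\<forall>\<^sub>\<infinity>R. norm (x - D R (E R x)) < real R powr - s l"
      by (auto simp: s_def not_frequently not_le)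
    then obtain N where N: "\<And>R. N \<le> R \<Longrightarrow> norm (x - D R (E R x)) < real R powr - s l"
      by (auto simp: MOST_nat_le)
    have "infdist x (codebook (D R) R) \<le> real R powr - s l" if "Suc N \<le> R" for R
      using infdist_codebook_le_error[OF codec x, of R D] N[of R] that by simp
    then have "x \<in> B l (Suc N)"
      by (simp add: B_def)
    with \<open>1 \<le> l\<close> show "x \<in> (\<Union>i\<in>{1..} \<times> UNIV. case_prod B i)"
      by (intro UN_I[of "(l, Suc N)"]) auto
  qed
  then obtain i U where "i \<in> {1..} \<times> UNIV" "open U" "S \<inter> U \<noteq> {}" "S \<inter> U \<subseteq> case_prod B i"
    by (rule Baire_closed_cover[OF \<open>closed S\<close> \<open>S \<noteq> {}\<close> countableI_type closed_B])
  moreover obtain l N where "i = (l, N)"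
    by fastforce
  ultimately have "1 \<le> l" and piece: "S \<inter> U \<subseteq> B l N"
    by auto
  obtain c t where "0 < t" and homothet: "(\<lambda>y. c + t *\<^sub>R y) ` S \<subseteq> S \<inter> U"
    using \<open>locally_self_homothetic S\<close> \<open>open U\<close> \<open>S \<inter> U \<noteq> {}\<close>
    unfolding locally_self_homothetic_def by meson
  have "ereal (s l) \<le> optimal_rate S"
    using \<open>bounded S\<close> \<open>0 < t\<close> real_of_optimal_rate_nonneg[of S] homothet piece
    by (intro optimal_rate_ge_if_homothet_approximable[where N = N and c = c and t = t and D = D])
      (auto simp: s_def B_def)
  moreover have "optimal_rate S < ereal (s l)"
    using \<open>optimal_rate S \<noteq> \<infinity>\<close> \<open>1 \<le> l\<close> by (cases "optimal_rate S") (auto simp: s_def)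
  ultimately show False
    by simp
qed

lemma locally_self_homotheticI:
  assumes "bounded S"
    and near: "\<And>x e. x \<in> S \<Longrightarrow> 0 < e \<Longrightarrow>
      \<exists>c t. 0 < t \<and> t < e \<and> dist x c < e \<and> (\<lambda>y. c + t *\<^sub>R y) ` S \<subseteq> S"
  shows "locally_self_homothetic S"
  unfolding locally_self_homothetic_def
proof (intro allI impI)
  fix U assume "open U" "S \<inter> U \<noteq> {}"
  then obtain x \<epsilon> where x: "x \<in> S" and "0 < \<epsilon>" and ball: "ball x \<epsilon> \<subseteq> U"
    by (meson IntE equals0I open_contains_ball)
  obtain M where "0 < M" and M: "\<And>y. y \<in> S \<Longrightarrow> norm y \<le> M"
    using \<open>bounded S\<close> by (auto simp: bounded_pos)
  define e where "e = \<epsilon> / (1 + M)"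
  have "0 < e"
    using \<open>0 < \<epsilon>\<close> \<open>0 < M\<close> by (simp add: e_def)
  then obtain c t where "0 < t" "t < e" "dist x c < e" and into_S: "(\<lambda>y. c + t *\<^sub>R y) ` S \<subseteq> S"
    using near[OF x] by blast
  have "c + t *\<^sub>R y \<in> ball x \<epsilon>" if "y \<in> S" for y
  proof -
    have "dist x (c + t *\<^sub>R y) \<le> dist x c + t * norm y"
      using dist_triangle[of x "c + t *\<^sub>R y" c] \<open>0 < t\<close> by (simp add: dist_norm)
    also have "\<dots> < e + e * M"
      using \<open>dist x c < e\<close> \<open>t < e\<close> \<open>0 < t\<close> M[OF that]
      by (smt (verit, best) mult_mono norm_ge_zero)
    also have "\<dots> = e * (1 + M)"
      by (simp add: algebra_simps)
    also have "\<dots> = \<epsilon>"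
      using \<open>0 < M\<close> by (simp add: e_def)
    finally show ?thesis
      by simp
  qed
  with into_S ball \<open>0 < t\<close> show "\<exists>c t. 0 < t \<and> (\<lambda>y. c + t *\<^sub>R y) ` S \<subseteq> S \<inter> U"
    by blast
qed

lemma ex_small_scalar:
  fixes a e :: real
  assumes "0 \<le> a" "0 < e"
  obtains d where "0 < d" "d < 1" "d < e" "d * a < e"
proof
  define d where "d = min (1 / 2) (e / (2 * (a + 1)))"
  show "0 < d" "d < 1"
    using assms by (simp_all add: d_def)
  have "d \<le> e / (2 * (a + 1))"
    by (simp add: d_def)
  then have "d * a + d \<le> e / 2"
    using assms by (simp add: le_divide_eq field_simps)
  moreover have "0 \<le> d * a"
    using assms \<open>0 < d\<close> by simp
  ultimately show "d < e" "d * a < e"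
    using assms \<open>0 < d\<close> by linarith+
qed

lemma convex_bounded_imp_locally_self_homothetic:
  fixes S :: "'a::real_normed_vector set"
  assumes "convex S" "bounded S"
  shows "locally_self_homothetic S"
proof (rule locally_self_homotheticI[OF \<open>bounded S\<close>])
  fix x and e :: real
  assume "x \<in> S" "0 < e"
  then obtain t where t: "0 < t" "t < 1" "t < e" "t * norm x < e"
    using ex_small_scalar[of "norm x" e] by auto
  have "(\<lambda>y. (1 - t) *\<^sub>R x + t *\<^sub>R y) ` S \<subseteq> S"
    using \<open>convex S\<close> \<open>x \<in> S\<close> t by (auto simp: convex_def)
  moreover have "dist x ((1 - t) *\<^sub>R x) < e"
    using t by (simp add: dist_norm algebra_simps)
  ultimately show "\<exists>c t. 0 < t \<and> t < e \<and> dist x c < e \<and> (\<lambda>y. c + t *\<^sub>R y) ` S \<subseteq> S"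
    using t by blast
qed

lemma bounded_sublevel_set_if_norm_le:
  fixes nstar :: "'a::real_normed_vector \<Rightarrow> ennreal"
  assumes "0 \<le> r" and norm_le: "\<And>x. ennreal (norm x) \<le> ennreal C * nstar x"
  shows "bounded {x. nstar x \<le> ennreal r}"
  unfolding bounded_iff
proof (intro exI ballI)
  fix x assume "x \<in> {x. nstar x \<le> ennreal r}"
  then have "ennreal C * nstar x \<le> ennreal C * ennreal r"
    by (intro mult_left_mono) auto
  then have "ennreal (norm x) \<le> ennreal C * ennreal r"
    using norm_le[of x] by (rule order_trans[rotated])
  also have "\<dots> = ennreal (C * r)"
    using \<open>0 \<le> r\<close> by (simp add: ennreal_mult'')
  finally show "norm x \<le> max 0 (C * r)"
    by (auto simp: ennreal_le_iff2)
qed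

lemma homothet_into_sublevel_set:
  fixes nstar :: "'a::real_normed_vector \<Rightarrow> ennreal"
  assumes hom: "\<And>\<alpha> x. nstar (\<alpha> *\<^sub>R x) = ennreal \<bar>\<alpha>\<bar> * nstar x"
    and cont: "\<And>xs x\<^sub>0. (\<lambda>n. nstar (xs n - x\<^sub>0)) \<longlonglongrightarrow> 0 \<Longrightarrow> (\<lambda>n. nstar (xs n)) \<longlonglongrightarrow> nstar x\<^sub>0"
    and "nstar c < ennreal r" "0 < t\<^sub>0"
  obtains t where "0 < t" "t \<le> t\<^sub>0"
    "(\<lambda>y. c + t *\<^sub>R y) ` {x. nstar x \<le> ennreal r} \<subseteq> {x. nstar x \<le> ennreal r}"
proof -
  let ?S = "{x. nstar x \<le> ennreal r}"
  have "0 < r"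
    using \<open>nstar c < ennreal r\<close> by (metis ennreal_less_zero_iff le_less_trans not_le zero_le)
  have "\<exists>n. (\<lambda>y. c + (t\<^sub>0 / Suc n) *\<^sub>R y) ` ?S \<subseteq> ?S"
  proof (rule ccontr)
    assume "\<nexists>n. (\<lambda>y. c + (t\<^sub>0 / Suc n) *\<^sub>R y) ` ?S \<subseteq> ?S"
    then obtain ys where ys: "\<And>n. ys n \<in> ?S" "\<And>n. ennreal r < nstar (c + (t\<^sub>0 / Suc n) *\<^sub>R ys n)"
      by (simp add: image_subset_iff not_le) metis
    define xs where "xs n = c + (t\<^sub>0 / Suc n) *\<^sub>R ys n" for n
    have upper: "nstar (xs n - c) \<le> ennreal (t\<^sub>0 * r / Suc n)" for n
    proof -
      have "nstar (xs n - c) = ennreal (t\<^sub>0 / Suc n) * nstar (ys n)"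
        using hom \<open>0 < t\<^sub>0\<close> by (simp add: xs_def)
      also have "\<dots> \<le> ennreal (t\<^sub>0 / Suc n) * ennreal r"
        using ys(1) by (intro mult_left_mono) auto
      also have "\<dots> = ennreal (t\<^sub>0 * r / Suc n)"
        using \<open>0 < t\<^sub>0\<close> \<open>0 < r\<close> by (simp add: ennreal_mult[symmetric])
      finally show ?thesis .
    qed
    have bound_lim: "(\<lambda>n. ennreal (t\<^sub>0 * r / Suc n)) \<longlonglongrightarrow> 0"
      using LIMSEQ_Suc[OF lim_const_over_n[of "t\<^sub>0 * r"]] tendsto_ennrealI[of _ 0] by fastforce
    have "(\<lambda>n. nstar (xs n - c)) \<longlonglongrightarrow> 0"
      by (rule tendsto_sandwich[OF _ _ tendsto_const bound_lim]) (use upper in auto)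
    then have "(\<lambda>n. nstar (xs n)) \<longlonglongrightarrow> nstar c"
      by (rule cont)
    then have "\<forall>\<^sub>F n in sequentially. nstar (xs n) < ennreal r"
      using \<open>nstar c < ennreal r\<close> by (rule order_tendstoD(2))
    then obtain n where "nstar (xs n) < ennreal r"
      by (auto simp: eventually_sequentially)
    with ys(2)[of n] show False
      by (simp add: xs_def)
  qed
  then obtain n where "(\<lambda>y. c + (t\<^sub>0 / Suc n) *\<^sub>R y) ` ?S \<subseteq> ?S" ..
  moreover have "0 < t\<^sub>0 / Suc n" "t\<^sub>0 / Suc n \<le> t\<^sub>0"
    using \<open>0 < t\<^sub>0\<close> by (auto simp: field_simps)
  ultimately show ?thesis
    using that by blast
qed

lemma sublevel_set_locally_self_homothetic:
  fixes nstar :: "'a::real_normed_vector \<Rightarrow> ennreal"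
  assumes "0 < r"
    and hom: "\<And>\<alpha> x. nstar (\<alpha> *\<^sub>R x) = ennreal \<bar>\<alpha>\<bar> * nstar x"
    and norm_le: "\<And>x. ennreal (norm x) \<le> ennreal C * nstar x"
    and cont: "\<And>xs x\<^sub>0. (\<lambda>n. nstar (xs n - x\<^sub>0)) \<longlonglongrightarrow> 0 \<Longrightarrow> (\<lambda>n. nstar (xs n)) \<longlonglongrightarrow> nstar x\<^sub>0"
  shows "locally_self_homothetic {x. nstar x \<le> ennreal r}"
proof (rule locally_self_homotheticI)
  show "bounded {x. nstar x \<le> ennreal r}"
    using \<open>0 < r\<close> norm_le by (intro bounded_sublevel_set_if_norm_le) auto
  fix x and e :: real
  assume x: "x \<in> {x. nstar x \<le> ennreal r}" and "0 < e"
  then obtain d where d: "0 < d" "d < 1" "d * norm x < e"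
    using ex_small_scalar[of "norm x" e] by auto
  have "nstar ((1 - d) *\<^sub>R x) = ennreal (1 - d) * nstar x"
    using hom d by simp
  also have "\<dots> \<le> ennreal (1 - d) * ennreal r"
    using x by (intro mult_left_mono) auto
  also have "\<dots> < ennreal r"
    using d \<open>0 < r\<close> by (simp add: ennreal_mult[symmetric] ennreal_less_iff)
  finally obtain t where "0 < t" "t \<le> e / 2"
    and "(\<lambda>y. (1 - d) *\<^sub>R x + t *\<^sub>R y) ` {x. nstar x \<le> ennreal r} \<subseteq> {x. nstar x \<le> ennreal r}"
    using homothet_into_sublevel_set[OF hom cont, of "(1 - d) *\<^sub>R x" r "e / 2"] \<open>0 < e\<close>
    by auto
  moreover have "dist x ((1 - d) *\<^sub>R x) < e"
    using d by (simp add: dist_norm algebra_simps)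
  ultimately show "\<exists>c t. 0 < t \<and> t < e \<and> dist x c < e \<and>
      (\<lambda>y. c + t *\<^sub>R y) ` {x. nstar x \<le> ennreal r} \<subseteq> {x. nstar x \<le> ennreal r}"
    using \<open>0 < e\<close> by (intro exI[of _ "(1 - d) *\<^sub>R x"] exI[of _ t]) auto
qed

theorem propositionG1:
  fixes S :: "'a::banach set"
  assumes "S \<noteq> {}"
    and "(closed S \<and> bounded S \<and> convex S) \<or>
         (\<exists>(r::real) (nstar :: 'a \<Rightarrow> ennreal) (\<kappa>::real) (C::real).
            r > 0 \<and> S = {x. nstar x \<le> ennreal r} \<and>
            \<kappa> \<ge> 1 \<and>
            (\<forall>\<alpha>::real. \<forall>x. nstar (\<alpha> *\<^sub>R x) = ennreal \<bar>\<alpha>\<bar> * nstar x) \<and>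
            (\<forall>x y. nstar (x + y) \<le> ennreal \<kappa> * (nstar x + nstar y)) \<and>
            C \<ge> 1 \<and> (\<forall>x. ennreal (norm x) \<le> ennreal C * nstar x) \<and>
            closed S \<and>
            (\<forall>xs x0. ((\<lambda>n. nstar (xs n - x0)) \<longlonglongrightarrow> 0) \<longrightarrow>
                       ((\<lambda>n. nstar (xs n)) \<longlonglongrightarrow> nstar x0)))"
    and "is_codec S E"
  shows "\<exists>x\<in>S. \<forall>l::nat. l \<ge> 1 \<longrightarrow>
           (\<exists>\<^sub>\<infinity>R::nat. R \<ge> 1 \<and>
              (optimal_rate S = \<infinity> \<or>
               norm (x - D R (E R x)) \<ge> real R powr (- (real_of_ereal (optimal_rate S) + 1 / real l))))"
proof (cases "optimal_rate S = \<infinity>")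
  case True
  then show ?thesis
    using assms(1) by (auto simp: INFM_nat_le intro: exI[of _ "Suc _"] le_SucI)
next
  case False
  have "closed S \<and> bounded S \<and> locally_self_homothetic S"
    using assms(2)
    by (elim disjE exE conjE)
      (auto simp: convex_bounded_imp_locally_self_homothetic
        intro: bounded_sublevel_set_if_norm_le sublevel_set_locally_self_homothetic)
  then obtain x where "x \<in> S" and bad: "\<forall>l::nat. 1 \<le> l \<longrightarrow>
      (\<exists>\<^sub>\<infinity>R. real R powr - (real_of_ereal (optimal_rate S) + 1 / real l) \<le> norm (x - D R (E R x)))"
    using exists_badly_approximated_point[OF assms(1) _ _ _ assms(3) False] by blast
  have "\<exists>\<^sub>\<infinity>R::nat. 1 \<le> R \<and> (optimal_rate S = \<infinity> \<or>
      norm (x - D R (E R x)) \<ge> real R powr - (real_of_ereal (optimal_rate S) + 1 / real l))"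
    if "1 \<le> l" for l
    using INFM_conjI[OF bad[rule_format, OF that] MOST_ge_nat[of 1]]
    by (rule frequently_elim1) auto
  with \<open>x \<in> S\<close> show ?thesis
    by blast
qed

end
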